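(* Let $L$ and $R$ be finite sets of edges (2-subsets of $[n]$) and $M$ a finite set of triangles (3-subsets of $[n]$), satisfying: (LR) there are no $\{l_1<l_2\}\in L$ and $\{r_1<r_2\}\in R$ with $r_1<l_1<r_2<l_2$; (LMR) there are no $\{v_1<v_2\}\in L\cup R$ and $\{w_1<w_2<w_3\}\in M$ with $w_1<v_1<w_2<v_2<w_3$; (MM) there are no $\{v_1<v_2<v_3\},\{w_1<w_2<w_3\}\in M$ with $v_1<w_1<v_2<w_2<v_3<w_3$. For an edge $e=\{v_1<v_2\}$ consider the conditions: (Le) there is no $\{l_1<l_2\}\in L$ with $v_1<l_1<v_2<l_2$; (Me) there is no $\{w_1<w_2<w_3\}\in M$ with $w_1<v_1<w_2<v_2<w_3$; (Re) there is no $\{r_1<r_2\}\in R$ with $r_1<v_1<r_2<v_2$. Let $V\subseteq[n]$ with $|V|\ge3$ be such that every edge of the convex polygon $P=\mathrm{conv}(V)$ (the points $\gamma_2(t_i)$, $i\in V$) satisfies (Le), (Me) and (Re). Then there is a triangulation $T$ of $P$ with vertices in $V$ such that every edge of $T$ satisfies (Le), (Me) and (Re).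
   Context: $\gamma_2=\{(t,t^2):t\in\mathbb{R}\}$. Fix $t_1<\dots<t_n$ and identify $\gamma_2(t_i)$ with $i\in[n]$; subsets of $[n]$ are ordered by the usual order of integers. $L$ and $R$ may intersect, and any of $L,M,R$ may be empty. *)

theory Defs
  imports "HOL-Analysis.Analysis"
begin

definition gamma2 :: "real \<Rightarrow> real \<times> real" where
  "gamma2 s = (s, s^2)"

definition pt :: "(nat \<Rightarrow> real) \<Rightarrow> nat \<Rightarrow> real \<times> real" where
  "pt t i = gamma2 (t i)"

definition cond_LR :: "nat set set \<Rightarrow> nat set set \<Rightarrow> bool" where
  "cond_LR L R \<longleftrightarrow> \<not> (\<exists>l1 l2 r1 r2. {l1, l2} \<in> L \<and> l1 < l2 \<and> {r1, r2} \<in> R \<and> r1 < r2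
      \<and> r1 < l1 \<and> l1 < r2 \<and> r2 < l2)"

definition cond_LMR :: "nat set set \<Rightarrow> nat set set \<Rightarrow> nat set set \<Rightarrow> bool" where
  "cond_LMR L M R \<longleftrightarrow> \<not> (\<exists>v1 v2 w1 w2 w3. {v1, v2} \<in> L \<union> R \<and> v1 < v2
      \<and> {w1, w2, w3} \<in> M \<and> w1 < w2 \<and> w2 < w3
      \<and> w1 < v1 \<and> v1 < w2 \<and> w2 < v2 \<and> v2 < w3)"

definition cond_MM :: "nat set set \<Rightarrow> bool" where
  "cond_MM M \<longleftrightarrow> \<not> (\<exists>v1 v2 v3 w1 w2 w3. {v1, v2, v3} \<in> M \<and> v1 < v2 \<and> v2 < v3
      \<and> {w1, w2, w3} \<in> M \<and> w1 < w2 \<and> w2 < w3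
      \<and> v1 < w1 \<and> w1 < v2 \<and> v2 < w2 \<and> w2 < v3 \<and> v3 < w3)"

definition cond_Le :: "nat set set \<Rightarrow> nat set \<Rightarrow> bool" where
  "cond_Le L e \<longleftrightarrow> (\<forall>v1 v2. e = {v1, v2} \<and> v1 < v2 \<longrightarrow>
      \<not> (\<exists>l1 l2. {l1, l2} \<in> L \<and> l1 < l2 \<and> v1 < l1 \<and> l1 < v2 \<and> v2 < l2))"

definition cond_Me :: "nat set set \<Rightarrow> nat set \<Rightarrow> bool" where
  "cond_Me M e \<longleftrightarrow> (\<forall>v1 v2. e = {v1, v2} \<and> v1 < v2 \<longrightarrow>
      \<not> (\<exists>w1 w2 w3. {w1, w2, w3} \<in> M \<and> w1 < w2 \<and> w2 < w3
          \<and> w1 < v1 \<and> v1 < w2 \<and> w2 < v2 \<and> v2 < w3))"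

definition cond_Re :: "nat set set \<Rightarrow> nat set \<Rightarrow> bool" where
  "cond_Re R e \<longleftrightarrow> (\<forall>v1 v2. e = {v1, v2} \<and> v1 < v2 \<longrightarrow>
      \<not> (\<exists>r1 r2. {r1, r2} \<in> R \<and> r1 < r2 \<and> r1 < v1 \<and> v1 < r2 \<and> r2 < v2))"

definition good_edge :: "nat set set \<Rightarrow> nat set set \<Rightarrow> nat set set \<Rightarrow> nat set \<Rightarrow> bool" where
  "good_edge L M R e \<longleftrightarrow> cond_Le L e \<and> cond_Me M e \<and> cond_Re R e"

definition polygon_edge :: "(nat \<Rightarrow> real) \<Rightarrow> nat set \<Rightarrow> nat set \<Rightarrow> bool" where
  "polygon_edge t V e \<longleftrightarrow> (\<exists>i j. e = {i, j} \<and> i \<in> V \<and> j \<in> V \<and> i \<noteq> j \<and>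
      closed_segment (pt t i) (pt t j) face_of convex hull (pt t ` V))"

definition is_triangulation :: "(nat \<Rightarrow> real) \<Rightarrow> nat set \<Rightarrow> nat set set \<Rightarrow> bool" where
  "is_triangulation t V T \<longleftrightarrow> finite T \<and> (\<forall>\<tau>\<in>T. \<tau> \<subseteq> V \<and> card \<tau> = 3) \<and>
      (\<Union>\<tau>\<in>T. convex hull (pt t ` \<tau>)) = convex hull (pt t ` V) \<and>
      (\<forall>\<tau>1\<in>T. \<forall>\<tau>2\<in>T. convex hull (pt t ` \<tau>1) \<inter> convex hull (pt t ` \<tau>2)
                        = convex hull (pt t ` (\<tau>1 \<inter> \<tau>2)))"

definition tri_edges :: "nat set set \<Rightarrow> nat set set" where
  "tri_edges T = {e. \<exists>\<tau>\<in>T. e \<subseteq> \<tau> \<and> card e = 2}"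

end

theory Submission
  imports Defs
begin

text \<open>
  Induct on the number of vertices. Let a < b be the extreme vertices of V; the chord {a, b}
  and the chords between consecutive vertices of V are edges of the polygon, hence good. Let m
  be the largest vertex of V strictly between a and b for which {a, m} is good (the successor
  of a qualifies). A case analysis on a hypothetical crossing of {m, b}, using (LR), (LMR),
  (MM), the maximality of m and the goodness of the polygon edges, shows that {m, b} is good
  too. The triangle {a, m, b} then completes triangulations of the two sub-polygons on the
  vertices in [a, m] and in [m, b], which exist by induction.

  All the geometry comes from the parabola: the affine function secant s s' vanishes on the
  line through gamma2 s and gamma2 s', and on the parabola it equals (x - s) (x - s'). So the
  chord through two vertices separates the vertices between them from the others, and convex
  hulls on opposite sides of a chord meet only within the chord.
\<close>

section \<open>Good edges and the apex of a fan\<close>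

text \<open>Together with {Min V, Max V}, the pairs of consecutive vertices are the polygon edges.\<close>

definition consecutive :: "nat set \<Rightarrow> nat \<Rightarrow> nat \<Rightarrow> bool" where
  "consecutive V p q \<longleftrightarrow> p \<in> V \<and> q \<in> V \<and> p < q \<and> (\<forall>y\<in>V. \<not> (p < y \<and> y < q))"

lemma consecutive_around:
  assumes V: "finite V" and "m \<in> V" "k \<in> V" "m \<le> x" "x < k"
  obtains p q where "consecutive V p q" "m \<le> p" "p \<le> x" "x < q" "q \<le> k"
proof
  let ?below = "{v \<in> V. v \<le> x}" and ?above = "{v \<in> V. x < v}"
  have ne: "?below \<noteq> {}" "?above \<noteq> {}" and fin: "finite ?below" "finite ?above"
    using assms by auto
  show "m \<le> Max ?below" "Max ?below \<le> x" using Max_in[OF fin(1) ne(1)] assms by (auto intro: Max_ge)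
  show "x < Min ?above" "Min ?above \<le> k" using Min_in[OF fin(2) ne(2)] assms by (auto intro: Min_le)
  have "\<not> (Max ?below < y \<and> y < Min ?above)" if "y \<in> V" for y
  proof (cases "y \<le> x")
    case True
    then show ?thesis using that fin(1) by (simp add: not_less Max_ge)
  next
    case False
    then show ?thesis using that fin(2) by (simp add: not_less Min_le)
  qed
  then show "consecutive V (Max ?below) (Min ?above)"
    unfolding consecutive_def using Max_in[OF fin(1) ne(1)] Min_in[OF fin(2) ne(2)] by auto
qed

lemma good_edge_iff:
  assumes "a < b"
  shows "good_edge L M R {a, b} \<longleftrightarrow>
    \<not> (\<exists>l1 l2. {l1, l2} \<in> L \<and> l1 < l2 \<and> a < l1 \<and> l1 < b \<and> b < l2) \<and>
    \<not> (\<exists>w1 w2 w3. {w1, w2, w3} \<in> M \<and> w1 < w2 \<and> w2 < w3 \<and> w1 < a \<and> a < w2 \<and> w2 < b \<and> b < w3) \<and>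
    \<not> (\<exists>r1 r2. {r1, r2} \<in> R \<and> r1 < r2 \<and> r1 < a \<and> a < r2 \<and> r2 < b)"
proof -
  have "{a, b} = {v1, v2} \<and> v1 < v2 \<longleftrightarrow> v1 = a \<and> v2 = b" for v1 v2
    using assms by (auto simp: doubleton_eq_iff)
  then show ?thesis
    unfolding good_edge_def cond_Le_def cond_Me_def cond_Re_def by simp
qed

lemma not_good_edgeE [consumes 2]:
  assumes "\<not> good_edge L M R {a, b}" "a < b"
  obtains (L_crossing) l1 l2 where "{l1, l2} \<in> L" "l1 < l2" "a < l1" "l1 < b" "b < l2"
    | (M_crossing) w1 w2 w3 where "{w1, w2, w3} \<in> M" "w1 < w2" "w2 < w3"
        "w1 < a" "a < w2" "w2 < b" "b < w3"
    | (R_crossing) r1 r2 where "{r1, r2} \<in> R" "r1 < r2" "r1 < a" "a < r2" "r2 < b"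
  using assms by (auto simp: good_edge_iff)

lemma good_edge_no_L_crossing:
  assumes "good_edge L M R {a, b}" "{l1, l2} \<in> L" "l1 < l2" "a < l1" "l1 < b" "b < l2"
  shows False
proof -
  have "a < b" using assms by linarith
  then show False using assms unfolding good_edge_iff[OF \<open>a < b\<close>] by blast
qed

lemma good_edge_no_M_crossing:
  assumes "good_edge L M R {a, b}" "{w1, w2, w3} \<in> M" "w1 < w2" "w2 < w3"
    "w1 < a" "a < w2" "w2 < b" "b < w3"
  shows False
proof -
  have "a < b" using assms by linarith
  then show False using assms unfolding good_edge_iff[OF \<open>a < b\<close>] by blast
qed

lemma good_edge_no_R_crossing:
  assumes "good_edge L M R {a, b}" "{r1, r2} \<in> R" "r1 < r2" "r1 < a" "a < r2" "r2 < b"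
  shows False
proof -
  have "a < b" using assms by linarith
  then show False using assms unfolding good_edge_iff[OF \<open>a < b\<close>] by blast
qed

lemma cond_LR_no_crossing:
  "cond_LR L R \<Longrightarrow> {l1, l2} \<in> L \<Longrightarrow> l1 < l2 \<Longrightarrow> {r1, r2} \<in> R \<Longrightarrow> r1 < r2 \<Longrightarrow>
    r1 < l1 \<Longrightarrow> l1 < r2 \<Longrightarrow> r2 < l2 \<Longrightarrow> False"
  unfolding cond_LR_def by blast

lemma cond_LMR_no_crossing:
  "cond_LMR L M R \<Longrightarrow> {v1, v2} \<in> L \<union> R \<Longrightarrow> v1 < v2 \<Longrightarrow> {w1, w2, w3} \<in> M \<Longrightarrow> w1 < w2 \<Longrightarrow> w2 < w3 \<Longrightarrow>
    w1 < v1 \<Longrightarrow> v1 < w2 \<Longrightarrow> w2 < v2 \<Longrightarrow> v2 < w3 \<Longrightarrow> False"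
  unfolding cond_LMR_def by blast

lemma cond_MM_no_crossing:
  "cond_MM M \<Longrightarrow> {v1, v2, v3} \<in> M \<Longrightarrow> v1 < v2 \<Longrightarrow> v2 < v3 \<Longrightarrow> {w1, w2, w3} \<in> M \<Longrightarrow> w1 < w2 \<Longrightarrow> w2 < w3 \<Longrightarrow>
    v1 < w1 \<Longrightarrow> w1 < v2 \<Longrightarrow> v2 < w2 \<Longrightarrow> w2 < v3 \<Longrightarrow> v3 < w3 \<Longrightarrow> False"
  unfolding cond_MM_def by blast

context
  fixes L M R :: "nat set set" and V :: "nat set" and a m b :: nat
  assumes LR: "cond_LR L R" and LMR: "cond_LMR L M R" and MM: "cond_MM M"
    and V: "finite V" "m \<in> V" "b \<in> V" and order: "a < m" "m < b"
    and good_am: "good_edge L M R {a, m}" and good_ab: "good_edge L M R {a, b}"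
    and maximal: "\<And>u. u \<in> V \<Longrightarrow> m < u \<Longrightarrow> u < b \<Longrightarrow> \<not> good_edge L M R {a, u}"
    and consecutive_good: "\<And>p q. consecutive V p q \<Longrightarrow> good_edge L M R {p, q}"
begin

lemma mem_if_gaps_not_good:
  assumes "m < x" "x < b"
    and gaps: "\<And>p q. m \<le> p \<Longrightarrow> p < x \<Longrightarrow> x < q \<Longrightarrow> q \<le> b \<Longrightarrow> good_edge L M R {p, q} \<Longrightarrow> False"
  shows "x \<in> V"
proof (rule ccontr)
  assume "x \<notin> V"
  obtain p q where pq: "consecutive V p q" "m \<le> p" "p \<le> x" "x < q" "q \<le> b"
    using consecutive_around[OF V(1,2,3)] assms(1,2) by (metis less_imp_le)
  then have "p < x" using \<open>x \<notin> V\<close> by (auto simp: consecutive_def order_le_less)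
  then show False using gaps[OF pq(2) _ pq(4,5)] consecutive_good[OF pq(1)] by blast
qed

text \<open>
  If w1 < a, the triangle w crosses {a, b}. Otherwise w2 is a vertex (if it lay strictly
  between two consecutive vertices in [m, b], w would cross their edge), so {a, w2} is not good
  by maximality of m, and each way it can fail contradicts a good edge, (LMR) or (MM).
\<close>

lemma no_M_crossing_after_maximal:
  assumes w: "{w1, w2, w3} \<in> M" "w1 < w2" "w2 < w3" "w1 < m" "m < w2" "w2 < b" "b < w3"
  shows False
proof (cases "w1 < a")
  case True
  show False
    by (rule good_edge_no_M_crossing[OF good_ab w(1-3)]) (use True w order in linarith)+
next
  case False
  have "w2 \<in> V"
  proof (rule mem_if_gaps_not_good[OF w(5,6)])
    fix p q assume pq: "m \<le> p" "p < w2" "w2 < q" "q \<le> b" and good: "good_edge L M R {p, q}"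
    show False
      by (rule good_edge_no_M_crossing[OF good w(1-3)]) (use pq w in linarith)+
  qed
  then have "\<not> good_edge L M R {a, w2}" using maximal w by blast
  moreover have "a < w2" using order w by linarith
  ultimately show False
  proof (cases rule: not_good_edgeE)
    case (L_crossing l1 l2)
    consider "l1 < m" | "m \<le> l1" "l2 < w3" | "m \<le> l1" "w3 \<le> l2" by linarith
    then show False
    proof cases
      case 1
      show False
        by (rule good_edge_no_L_crossing[OF good_am L_crossing(1,2)]) (use 1 L_crossing w in linarith)+
    next
      case 2
      show False
        by (rule cond_LMR_no_crossing[OF LMR _ L_crossing(2) w(1-3)]) (use 2 L_crossing w False in auto)
    next
      case 3
      show False
        by (rule good_edge_no_L_crossing[OF good_ab L_crossing(1,2)]) (use 3 L_crossing w in linarith)+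
    qed
  next
    case (M_crossing x1 x2 x3)
    consider "x2 < m" | "m \<le> x2" "b < x3" | "m \<le> x2" "x3 \<le> b" by linarith
    then show False
    proof cases
      case 1
      show False
        by (rule good_edge_no_M_crossing[OF good_am M_crossing(1-3)]) (use 1 M_crossing w in linarith)+
    next
      case 2
      show False
        by (rule good_edge_no_M_crossing[OF good_ab M_crossing(1-3)]) (use 2 M_crossing w in linarith)+
    next
      case 3
      show False
        by (rule cond_MM_no_crossing[OF MM M_crossing(1-3) w(1-3)]) (use 3 M_crossing w False in linarith)+
    qed
  next
    case (R_crossing r1 r2)
    show False
      by (rule good_edge_no_R_crossing[OF good_ab R_crossing(1,2)]) (use R_crossing w in linarith)+
  qed
qed

text \<open>The same argument for an R-edge, now also using (LR).\<close>

lemma no_R_crossing_after_maximal: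
  assumes r: "{r1, r2} \<in> R" "r1 < r2" "r1 < m" "m < r2" "r2 < b"
  shows False
proof (cases "r1 < a")
  case True
  show False
    by (rule good_edge_no_R_crossing[OF good_ab r(1,2)]) (use True r order in linarith)+
next
  case False
  have "r2 \<in> V"
  proof (rule mem_if_gaps_not_good[OF r(4,5)])
    fix p q assume pq: "m \<le> p" "p < r2" "r2 < q" "q \<le> b" and good: "good_edge L M R {p, q}"
    show False
      by (rule good_edge_no_R_crossing[OF good r(1,2)]) (use pq r in linarith)+
  qed
  then have "\<not> good_edge L M R {a, r2}" using maximal r by blast
  moreover have "a < r2" using order r by linarith
  ultimately show False
  proof (cases rule: not_good_edgeE)
    case (L_crossing l1 l2)
    show False
    proof (cases "r1 < l1")
      case True
      show False
        by (rule cond_LR_no_crossing[OF LR L_crossing(1,2) r(1,2)]) (use True L_crossing r in linarith)+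
    next
      case False
      show False
        by (rule good_edge_no_L_crossing[OF good_am L_crossing(1,2)]) (use False L_crossing r in linarith)+
    qed
  next
    case (M_crossing x1 x2 x3)
    show False
    proof (cases "x2 < m")
      case True
      show False
        by (rule good_edge_no_M_crossing[OF good_am M_crossing(1-3)]) (use True M_crossing r in linarith)+
    next
      case False
      show False
        by (rule cond_LMR_no_crossing[OF LMR _ r(2) M_crossing(1-3)]) (use False M_crossing r \<open>\<not> r1 < a\<close> in auto)
    qed
  next
    case (R_crossing r1' r2')
    show False
      by (rule good_edge_no_R_crossing[OF good_ab R_crossing(1,2)]) (use R_crossing r in linarith)+
  qed
qed

lemma good_edge_after_maximal: "good_edge L M R {m, b}"
proof (rule ccontr)
  assume "\<not> good_edge L M R {m, b}"
  from this order(2) show False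
  proof (cases rule: not_good_edgeE)
    case (L_crossing l1 l2)
    show False
      by (rule good_edge_no_L_crossing[OF good_ab L_crossing(1,2)]) (use L_crossing order in linarith)+
  next
    case (M_crossing w1 w2 w3)
    then show False by (rule no_M_crossing_after_maximal)
  next
    case (R_crossing r1 r2)
    then show False by (rule no_R_crossing_after_maximal)
  qed
qed

end

lemma exists_good_apex:
  assumes LR: "cond_LR L R" and LMR: "cond_LMR L M R" and MM: "cond_MM M"
    and V: "finite V" "a \<in> V" "b \<in> V" "u \<in> V" "a < u" "u < b"
    and good_ab: "good_edge L M R {a, b}"
    and consecutive_good: "\<And>p q. consecutive V p q \<Longrightarrow> good_edge L M R {p, q}"
  obtains m where "m \<in> V" "a < m" "m < b" "good_edge L M R {a, m}" "good_edge L M R {m, b}"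
proof -
  define S where "S = {x \<in> V. a < x \<and> x < b \<and> good_edge L M R {a, x}}"
  obtain p q where pq: "consecutive V p q" "a \<le> p" "p \<le> a" "a < q" "q \<le> u"
    using consecutive_around[OF V(1,2,4)] V(5) by blast
  then have "q \<in> S"
    using consecutive_good[of a q] V unfolding S_def consecutive_def by fastforce
  then have S: "finite S" "S \<noteq> {}" using V(1) unfolding S_def by auto
  define m where "m = Max S"
  have "m \<in> S" unfolding m_def using Max_in[OF S] .
  then have m: "m \<in> V" "a < m" "m < b" "good_edge L M R {a, m}" unfolding S_def by auto
  have maximal: "\<not> good_edge L M R {a, x}" if "x \<in> V" "m < x" "x < b" for x
  proof
    assume "good_edge L M R {a, x}"
    then have "x \<in> S" using that m(2) unfolding S_def by auto
    then show False using Max_ge[OF S(1)] that(2) unfolding m_def by fastforce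
  qed
  have "good_edge L M R {m, b}"
    using good_edge_after_maximal[OF LR LMR MM V(1) m(1) V(3) m(2-4) good_ab maximal consecutive_good] .
  with m show thesis by (rule that)
qed

lemma consecutive_lower_part: "consecutive {i \<in> V. i \<le> m} p q \<Longrightarrow> consecutive V p q"
  unfolding consecutive_def by auto

lemma consecutive_upper_part: "consecutive {i \<in> V. m \<le> i} p q \<Longrightarrow> consecutive V p q"
  unfolding consecutive_def by auto

lemma card_2_Min_Max: "card V = 2 \<Longrightarrow> V = {Min V, Max V}"
  by (auto simp: card_2_iff min_def max_def split: if_split_asm)

lemma Min_less_Max:
  fixes V :: "'a::linorder set"
  assumes "finite V" "2 \<le> card V"
  shows "Min V < Max V"
proof -
  have "\<not> card V \<le> Suc 0" using assms(2) by simp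
  then obtain x y where "x \<in> V" "y \<in> V" "x < y"
    using assms(1) by (metis card_le_Suc0_iff_eq linorder_neqE)
  then show ?thesis
    using Min_le[OF assms(1)] Max_ge[OF assms(1)] by (meson le_less_trans less_le_trans)
qed

lemma exists_between_Min_Max:
  fixes V :: "'a::linorder set"
  assumes "finite V" "card V \<noteq> 2" "2 \<le> card V"
  shows "\<exists>u\<in>V. Min V < u \<and> u < Max V"
proof (rule ccontr)
  assume "\<not> (\<exists>u\<in>V. Min V < u \<and> u < Max V)"
  moreover have "Min V \<le> u" "u \<le> Max V" if "u \<in> V" for u
    using that assms(1) by simp_all
  ultimately have "V \<subseteq> {Min V, Max V}" by (auto simp: order.order_iff_strict)
  then have "card V \<le> card {Min V, Max V}" by (intro card_mono) auto
  also have "\<dots> \<le> 2" by (cases "Min V = Max V") auto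
  finally show False using assms(2,3) by simp
qed

lemma split_at_vertex:
  fixes V :: "'a::linorder set"
  assumes "finite V" "m \<in> V" "Min V < m" "m < Max V"
  shows "Min {i \<in> V. i \<le> m} = Min V" "Max {i \<in> V. i \<le> m} = m"
    "Min {i \<in> V. m \<le> i} = m" "Max {i \<in> V. m \<le> i} = Max V"
    "card {i \<in> V. i \<le> m} < card V" "card {i \<in> V. m \<le> i} < card V"
    "2 \<le> card {i \<in> V. i \<le> m}" "2 \<le> card {i \<in> V. m \<le> i}"
proof -
  have "V \<noteq> {}" using assms(2) by auto
  then have V: "Min V \<in> V" "Max V \<in> V" using assms(1) by auto
  show "Min {i \<in> V. i \<le> m} = Min V" "Max {i \<in> V. i \<le> m} = m"
    "Min {i \<in> V. m \<le> i} = m" "Max {i \<in> V. m \<le> i} = Max V"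
    using V assms by (auto intro!: Min_eqI Max_eqI)
  have "Max V \<notin> {i \<in> V. i \<le> m}" "Min V \<notin> {i \<in> V. m \<le> i}" using assms(3,4) by auto
  then have "{i \<in> V. i \<le> m} \<subset> V" "{i \<in> V. m \<le> i} \<subset> V" using V by blast+
  then show "card {i \<in> V. i \<le> m} < card V" "card {i \<in> V. m \<le> i} < card V"
    using assms(1) by (simp_all add: psubset_card_mono)
  have "{Min V, m} \<subseteq> {i \<in> V. i \<le> m}" "{m, Max V} \<subseteq> {i \<in> V. m \<le> i}"
    using V assms by auto
  moreover have "finite {i \<in> V. i \<le> m}" "finite {i \<in> V. m \<le> i}" using assms(1) by simp_all
  moreover have "card {Min V, m} = 2" "card {m, Max V} = 2" using assms(3,4) by auto
  ultimately show "2 \<le> card {i \<in> V. i \<le> m}" "2 \<le> card {i \<in> V. m \<le> i}"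
    by (metis card_mono)+
qed

section \<open>Secants of the parabola\<close>

definition secant :: "real \<Rightarrow> real \<Rightarrow> real \<times> real \<Rightarrow> real" where
  "secant a b z = snd z - (a + b) * fst z + a * b"

lemma secant_inner: "secant a b z = (- (a + b), 1) \<bullet> z + a * b"
  by (cases z) (simp add: secant_def inner_prod_def algebra_simps)

lemma neg_secant_inner: "- secant a b z = (a + b, - 1) \<bullet> z + - (a * b)"
  by (cases z) (simp add: secant_def inner_prod_def)

lemma secant_gamma2: "secant a b (gamma2 s) = (s - a) * (s - b)"
  by (simp add: secant_def gamma2_def power2_eq_square algebra_simps)

lemma affine_nonneg_on_convex_hull:
  fixes f :: "'a::real_inner \<Rightarrow> real"
  assumes f: "\<And>z. f z = c \<bullet> z + d" and S: "\<And>z. z \<in> S \<Longrightarrow> 0 \<le> f z"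
    and z: "z \<in> convex hull S"
  shows "0 \<le> f z"
proof -
  have "convex hull S \<subseteq> {z. - d \<le> c \<bullet> z}"
    by (rule hull_minimal) (auto simp: convex_halfspace_ge f dest!: S)
  then show ?thesis using z by (auto simp: f)
qed

lemma affine_zero_set_face_of_convex_hull:
  fixes f :: "'a::real_inner \<Rightarrow> real"
  assumes f: "\<And>z. f z = c \<bullet> z + d" and S: "\<And>z. z \<in> S \<Longrightarrow> 0 \<le> f z"
  shows "(convex hull S \<inter> {z. f z = 0}) face_of convex hull S"
proof -
  have "- d \<le> c \<bullet> z" if "z \<in> convex hull S" for z
    using affine_nonneg_on_convex_hull[OF f S that] by (simp add: f)
  then have "(convex hull S \<inter> {z. c \<bullet> z = - d}) face_of convex hull S"
    by (intro face_of_Int_supporting_hyperplane_ge) auto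
  moreover have "{z. f z = 0} = {z. c \<bullet> z = - d}"
    by (auto simp: f)
  ultimately show ?thesis by simp
qed

lemma convex_hull_Int_affine_zero_set:
  fixes f :: "'a::euclidean_space \<Rightarrow> real"
  assumes f: "\<And>z. f z = c \<bullet> z + d" and S: "\<And>z. z \<in> S \<Longrightarrow> 0 \<le> f z" and "finite S"
  shows "convex hull S \<inter> {z. f z = 0} = convex hull (S \<inter> {z. f z = 0})"
proof
  obtain S' where S': "S' \<subseteq> S" "convex hull S \<inter> {z. f z = 0} = convex hull S'"
    using face_of_convex_hull_subset affine_zero_set_face_of_convex_hull[OF f S]
      finite_imp_compact[OF \<open>finite S\<close>] by metis
  then have "S' \<subseteq> S \<inter> {z. f z = 0}"
    using hull_subset[of S' convex] by blast
  then show "convex hull S \<inter> {z. f z = 0} \<subseteq> convex hull (S \<inter> {z. f z = 0})"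
    using S' hull_mono by metis
  have "convex {z. f z = 0}"
    using convex_hyperplane[of c "- d"] by (simp add: f eq_neg_iff_add_eq_0)
  then show "convex hull (S \<inter> {z. f z = 0}) \<subseteq> convex hull S \<inter> {z. f z = 0}"
    by (simp add: hull_minimal hull_mono hull_subset le_infI2)
qed

lemma closed_segment_subset_Un_by_affine:
  fixes x y :: "'a::euclidean_space"
  assumes f: "\<And>z. f z = c \<bullet> z + d"
    and C1: "convex C1" "x \<in> C1" and C2: "convex C2" "y \<in> C2"
    and fx: "f x \<le> 0" and fy: "0 \<le> f y"
    and zeros: "\<And>z. z \<in> closed_segment x y \<Longrightarrow> f z = 0 \<Longrightarrow> z \<in> C1 \<inter> C2"
  shows "closed_segment x y \<subseteq> C1 \<union> C2"
proof -
  define s where "s = f x / (f x - f y)"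
  define z where "z = (1 - s) *\<^sub>R x + s *\<^sub>R y"
  show ?thesis
  proof (cases "f x = f y")
    case True
    then have "y \<in> C1" using zeros[of y] fx fy by auto
    then show ?thesis using closed_segment_subset C1 by blast
  next
    case False
    then have "0 \<le> s" "s \<le> 1" using fx fy by (auto simp: s_def divide_simps)
    then have z: "z \<in> closed_segment x y" unfolding z_def in_segment by blast
    have "f z = (1 - s) * f x + s * f y"
      by (simp add: z_def f inner_add_right algebra_simps)
    also have "\<dots> = 0" using False by (simp add: s_def field_simps)
    finally have "z \<in> C1 \<inter> C2" using zeros z by blast
    then have "closed_segment x z \<subseteq> C1" "closed_segment z y \<subseteq> C2"
      using closed_segment_subset C1 C2 by blast+
    then show ?thesis using Un_closed_segment[OF z] by blast
  qed
qed

lemma convex_hull_parabola_Int_secant: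
  assumes ab: "a < b" and z: "z \<in> convex hull (gamma2 ` X)" and z0: "secant a b z = 0"
  shows "z \<in> closed_segment (gamma2 a) (gamma2 b)"
proof -
  have tangent: "0 \<le> secant c c z" for c
    by (rule affine_nonneg_on_convex_hull[OF secant_inner _ z]) (auto simp: secant_gamma2)
  obtain zx zy where zxy: "z = (zx, zy)" by (cases z)
  have zy: "zy = (a + b) * zx - a * b" using z0 by (simp add: zxy secant_def)
  have "0 \<le> (b - a) * (zx - a)" "0 \<le> (b - a) * (b - zx)"
    using tangent[of a] tangent[of b] by (simp_all add: zxy secant_def zy algebra_simps)
  then have "a \<le> zx" "zx \<le> b" using ab by (simp_all add: zero_le_mult_iff)
  define u where "u = (zx - a) / (b - a)"
  have "0 \<le> u" "u \<le> 1" unfolding u_def using ab \<open>a \<le> zx\<close> \<open>zx \<le> b\<close> by (auto simp: divide_simps)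
  moreover have zx: "zx = a + u * (b - a)" using ab by (simp add: u_def)
  have "z = (1 - u) *\<^sub>R gamma2 a + u *\<^sub>R gamma2 b"
    by (simp add: zxy zy zx gamma2_def power2_eq_square algebra_simps)
  ultimately show ?thesis unfolding in_segment by blast
qed

lemma convex_hull_Int_subsets_of_pair:
  assumes "X \<subseteq> {a, b}" "Y \<subseteq> {a, b}" "P a \<noteq> P b"
  shows "convex hull (P ` X) \<inter> convex hull (P ` Y) \<subseteq> convex hull (P ` (X \<inter> Y))"
proof (cases "X \<subseteq> Y \<or> Y \<subseteq> X")
  case True
  then show ?thesis by (metis Int_absorb1 Int_absorb2 inf.cobounded1 inf.cobounded2)
next
  case False
  then have "(X = {a} \<and> Y = {b}) \<or> (X = {b} \<and> Y = {a})" using assms(1,2) by blast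
  then show ?thesis using assms(3) by auto
qed

section \<open>Triangulating the polygon\<close>

definition tri_complex :: "(nat \<Rightarrow> real) \<Rightarrow> nat set \<Rightarrow> nat set set \<Rightarrow> bool" where
  "tri_complex t V T \<longleftrightarrow> finite T \<and> (\<forall>\<tau>\<in>T. \<tau> \<subseteq> V \<and> card \<tau> = 3) \<and>
     (\<forall>\<tau>1\<in>T. \<forall>\<tau>2\<in>T. convex hull (pt t ` \<tau>1) \<inter> convex hull (pt t ` \<tau>2)
                        = convex hull (pt t ` (\<tau>1 \<inter> \<tau>2)))"

lemma is_triangulation_iff:
  "is_triangulation t V T \<longleftrightarrow>
     tri_complex t V T \<and> convex hull (pt t ` V) \<subseteq> (\<Union>\<tau>\<in>T. convex hull (pt t ` \<tau>))"
proof -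
  have "(\<Union>\<tau>\<in>T. convex hull (pt t ` \<tau>)) = convex hull (pt t ` V) \<longleftrightarrow>
      convex hull (pt t ` V) \<subseteq> (\<Union>\<tau>\<in>T. convex hull (pt t ` \<tau>))"
    if "\<forall>\<tau>\<in>T. \<tau> \<subseteq> V \<and> card \<tau> = 3"
  proof -
    have "(\<Union>\<tau>\<in>T. convex hull (pt t ` \<tau>)) \<subseteq> convex hull (pt t ` V)"
      using that by (intro UN_least hull_mono image_mono) blast
    then show ?thesis by blast
  qed
  then show ?thesis
    unfolding is_triangulation_def tri_complex_def by argo
qed

lemma tri_complex_mono: "tri_complex t V T \<Longrightarrow> V \<subseteq> W \<Longrightarrow> tri_complex t W T"
  unfolding tri_complex_def by (meson subset_trans)

lemma tri_complex_singleton: "\<tau> \<subseteq> V \<Longrightarrow> card \<tau> = 3 \<Longrightarrow> tri_complex t V {\<tau>}"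
  unfolding tri_complex_def by simp

lemma tri_complex_Un:
  assumes "tri_complex t V T1" "tri_complex t V T2"
    and "\<And>\<tau> \<sigma>. \<tau> \<in> T1 \<Longrightarrow> \<sigma> \<in> T2 \<Longrightarrow>
      convex hull (pt t ` \<tau>) \<inter> convex hull (pt t ` \<sigma>) = convex hull (pt t ` (\<tau> \<inter> \<sigma>))"
  shows "tri_complex t V (T1 \<union> T2)"
proof -
  have "convex hull (pt t ` \<tau>) \<inter> convex hull (pt t ` \<sigma>) = convex hull (pt t ` (\<tau> \<inter> \<sigma>))"
    if "\<tau> \<in> T1 \<union> T2" "\<sigma> \<in> T1 \<union> T2" for \<tau> \<sigma>
    using that assms(1,2) assms(3)[of \<tau> \<sigma>] assms(3)[of \<sigma> \<tau>]
    unfolding tri_complex_def by (metis Int_commute Un_iff)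
  moreover have "finite (T1 \<union> T2)" "\<forall>\<tau>\<in>T1 \<union> T2. \<tau> \<subseteq> V \<and> card \<tau> = 3"
    using assms(1,2) unfolding tri_complex_def by auto
  ultimately show ?thesis unfolding tri_complex_def by simp
qed

lemma tri_edges_insert_triangle:
  "tri_edges (insert {a, b, c} T) \<subseteq> {{a, b}, {a, c}, {b, c}} \<union> tri_edges T"
proof
  fix e assume "e \<in> tri_edges (insert {a, b, c} T)"
  then consider "e \<in> tri_edges T" | "e \<subseteq> {a, b, c}" "card e = 2"
    unfolding tri_edges_def by blast
  then show "e \<in> {{a, b}, {a, c}, {b, c}} \<union> tri_edges T"
    by cases (auto simp: card_2_iff)
qed

lemma tri_edges_Un: "tri_edges (T1 \<union> T2) = tri_edges T1 \<union> tri_edges T2"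
  unfolding tri_edges_def by blast

context
  fixes t :: "nat \<Rightarrow> real" and I :: "nat set"
  assumes t_mono: "strict_mono_on I t"
begin

lemma secant_pt_nonpos:
  "a \<in> I \<Longrightarrow> b \<in> I \<Longrightarrow> i \<in> I \<Longrightarrow> a \<le> i \<Longrightarrow> i \<le> b \<Longrightarrow> secant (t a) (t b) (pt t i) \<le> 0"
  by (simp add: pt_def secant_gamma2 mult_nonneg_nonpos strict_mono_on_less_eq[OF t_mono])

lemma secant_pt_nonneg:
  assumes "a \<in> I" "b \<in> I" "i \<in> I" "a \<le> b" "i \<le> a \<or> b \<le> i"
  shows "0 \<le> secant (t a) (t b) (pt t i)"
  using assms by (auto simp: pt_def secant_gamma2 strict_mono_on_less_eq[OF t_mono]
      intro: mult_nonpos_nonpos)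

lemma secant_pt_eq_0_iff:
  "a \<in> I \<Longrightarrow> b \<in> I \<Longrightarrow> i \<in> I \<Longrightarrow> secant (t a) (t b) (pt t i) = 0 \<longleftrightarrow> i = a \<or> i = b"
  by (simp add: pt_def secant_gamma2 strict_mono_on_eq[OF t_mono])

lemma pt_image_Int_secant_zero:
  "A \<subseteq> I \<Longrightarrow> a \<in> I \<Longrightarrow> b \<in> I \<Longrightarrow>
    pt t ` A \<inter> {z. secant (t a) (t b) z = 0} = pt t ` (A \<inter> {a, b})"
  using secant_pt_eq_0_iff by auto

lemma pt_eq_iff: "i \<in> I \<Longrightarrow> j \<in> I \<Longrightarrow> pt t i = pt t j \<longleftrightarrow> i = j"
  by (auto simp: pt_def gamma2_def strict_mono_on_eq[OF t_mono])

lemma convex_hull_Int_chord_sides: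
  assumes ab: "a \<in> I" "b \<in> I" "a < b"
    and A: "finite A" "A \<subseteq> I" "\<And>i. i \<in> A \<Longrightarrow> a \<le> i \<and> i \<le> b"
    and B: "finite B" "B \<subseteq> I" "\<And>i. i \<in> B \<Longrightarrow> i \<le> a \<or> b \<le> i"
  shows "convex hull (pt t ` A) \<inter> convex hull (pt t ` B) = convex hull (pt t ` (A \<inter> B))"
proof
  let ?f = "secant (t a) (t b)"
  have A_side: "0 \<le> - ?f z" if "z \<in> pt t ` A" for z
    using that A ab by (auto intro: secant_pt_nonpos)
  have B_side: "0 \<le> ?f z" if "z \<in> pt t ` B" for z
    using that B ab less_imp_le[OF ab(3)] by (blast intro: secant_pt_nonneg)
  show "convex hull (pt t ` A) \<inter> convex hull (pt t ` B) \<subseteq> convex hull (pt t ` (A \<inter> B))"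
  proof
    fix z assume z: "z \<in> convex hull (pt t ` A) \<inter> convex hull (pt t ` B)"
    have "0 \<le> - ?f z" "0 \<le> ?f z"
      using affine_nonneg_on_convex_hull[OF neg_secant_inner A_side]
        affine_nonneg_on_convex_hull[OF secant_inner B_side] z by blast+
    moreover have "convex hull (pt t ` A) \<inter> {z. - ?f z = 0} = convex hull (pt t ` (A \<inter> {a, b}))"
      using convex_hull_Int_affine_zero_set[of "\<lambda>z. - ?f z" _ _ "pt t ` A",
          OF neg_secant_inner A_side]
        pt_image_Int_secant_zero[of A a b] A ab by simp
    moreover have "convex hull (pt t ` B) \<inter> {z. ?f z = 0} = convex hull (pt t ` (B \<inter> {a, b}))"
      using convex_hull_Int_affine_zero_set[of ?f _ _ "pt t ` B", OF secant_inner B_side]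
        pt_image_Int_secant_zero[of B a b] B ab by simp
    ultimately have "z \<in> convex hull (pt t ` (A \<inter> {a, b}))" "z \<in> convex hull (pt t ` (B \<inter> {a, b}))"
      using z by auto
    then have "z \<in> convex hull (pt t ` ((A \<inter> {a, b}) \<inter> (B \<inter> {a, b})))"
      using convex_hull_Int_subsets_of_pair[of "A \<inter> {a, b}" a b "B \<inter> {a, b}" "pt t"]
        pt_eq_iff ab by auto
    then show "z \<in> convex hull (pt t ` (A \<inter> B))"
      by (rule rev_subsetD) (intro hull_mono image_mono, blast)
  qed
  show "convex hull (pt t ` (A \<inter> B)) \<subseteq> convex hull (pt t ` A) \<inter> convex hull (pt t ` B)"
    by (simp add: hull_mono image_mono)
qed


lemma convex_hull_pt_Int_secant_zero:
  assumes "a \<in> W" "b \<in> W" "a < b" "W \<subseteq> I"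
  shows "convex hull (pt t ` W) \<inter> {z. secant (t a) (t b) z = 0} \<subseteq> convex hull (pt t ` {a, b})"
proof
  fix z assume z: "z \<in> convex hull (pt t ` W) \<inter> {z. secant (t a) (t b) z = 0}"
  have "pt t ` W = gamma2 ` t ` W" unfolding pt_def[abs_def] image_image ..
  then have "z \<in> convex hull (gamma2 ` t ` W)" using z by simp
  moreover have "t a < t b" using strict_mono_onD[OF t_mono] assms by blast
  ultimately have "z \<in> closed_segment (gamma2 (t a)) (gamma2 (t b))"
    using convex_hull_parabola_Int_secant z by blast
  then show "z \<in> convex hull (pt t ` {a, b})" by (simp add: pt_def segment_convex_hull)
qed

text \<open>
  A point of conv W lies on a segment from C_in to C_out. The secant changes sign along it
  and vanishes only on the chord, which belongs to both hulls.
\<close>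

lemma convex_hull_subset_chord_sides:
  assumes ab: "a \<in> W" "b \<in> W" "a < b" and W: "finite W" "W \<subseteq> I"
  defines "C_in \<equiv> convex hull (pt t ` {i \<in> W. a \<le> i \<and> i \<le> b})"
    and "C_out \<equiv> convex hull (pt t ` {i \<in> W. i \<le> a \<or> b \<le> i})"
  shows "convex hull (pt t ` W) \<subseteq> C_in \<union> C_out"
proof -
  let ?f = "secant (t a) (t b)"
  have "pt t ` W = pt t ` {i \<in> W. a \<le> i \<and> i \<le> b} \<union> pt t ` {i \<in> W. i \<le> a \<or> b \<le> i}"
    unfolding image_Un[symmetric] by (rule arg_cong[where f = "image (pt t)"]) auto
  then have "convex hull (pt t ` W) = convex hull (C_in \<union> C_out)"
    unfolding C_in_def C_out_def by (metis hull_Un_left hull_Un_right)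
  also have "\<dots> = {u *\<^sub>R x + v *\<^sub>R y | u v x y. 0 \<le> u \<and> 0 \<le> v \<and> u + v = 1 \<and> x \<in> C_in \<and> y \<in> C_out}"
    unfolding C_in_def C_out_def using ab by (intro convex_hull_union_two) auto
  also have "\<dots> \<subseteq> C_in \<union> C_out"
  proof
    fix p assume "p \<in> {u *\<^sub>R x + v *\<^sub>R y | u v x y. 0 \<le> u \<and> 0 \<le> v \<and> u + v = 1 \<and> x \<in> C_in \<and> y \<in> C_out}"
    then obtain u v x y where uv: "0 \<le> u" "0 \<le> v" "u + v = 1" and x: "x \<in> C_in" and y: "y \<in> C_out"
      and p: "p = u *\<^sub>R x + v *\<^sub>R y"
      by blast
    have "0 \<le> - ?f x"
      by (rule affine_nonneg_on_convex_hull[OF neg_secant_inner _ x[unfolded C_in_def]])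
        (use ab W in \<open>auto intro!: secant_pt_nonpos\<close>)
    moreover have "0 \<le> ?f y"
      by (rule affine_nonneg_on_convex_hull[OF secant_inner _ y[unfolded C_out_def]])
        (use ab W in \<open>auto intro!: secant_pt_nonneg\<close>)
    moreover have "z \<in> C_in \<inter> C_out" if z: "z \<in> closed_segment x y" "?f z = 0" for z
    proof -
      have "C_in \<subseteq> convex hull (pt t ` W)" "C_out \<subseteq> convex hull (pt t ` W)"
        unfolding C_in_def C_out_def by (auto intro!: hull_mono)
      then have "z \<in> convex hull (pt t ` W)"
        using z(1) x y closed_segment_subset_convex_hull by blast
      then have "z \<in> convex hull (pt t ` {a, b})"
        using convex_hull_pt_Int_secant_zero[OF ab W(2)] z(2) by blast
      moreover have "pt t ` {a, b} \<subseteq> pt t ` {i \<in> W. a \<le> i \<and> i \<le> b}"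
        "pt t ` {a, b} \<subseteq> pt t ` {i \<in> W. i \<le> a \<or> b \<le> i}"
        using ab by auto
      ultimately show ?thesis
        unfolding C_in_def C_out_def by (meson IntI hull_mono subsetD)
    qed
    ultimately have seg: "closed_segment x y \<subseteq> C_in \<union> C_out"
      using closed_segment_subset_Un_by_affine[OF secant_inner, of C_in x C_out y] x y
      unfolding C_in_def C_out_def by simp
    have "u = 1 - v" using uv by simp
    then have "p \<in> closed_segment x y"
      using uv unfolding p in_segment by (intro exI[of _ v]) simp
    with seg show "p \<in> C_in \<union> C_out" by blast
  qed
  finally show ?thesis .
qed

lemma polygon_edge_if_one_side:
  assumes V: "finite V" "V \<subseteq> I" and pq: "p \<in> V" "q \<in> V" "p < q"
    and side: "(\<forall>i\<in>V. i \<le> p \<or> q \<le> i) \<or> (\<forall>i\<in>V. p \<le> i \<and> i \<le> q)"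
  shows "polygon_edge t V {p, q}"
proof -
  let ?f = "secant (t p) (t q)"
  have pqI: "p \<in> I" "q \<in> I" using pq V by auto
  obtain f c d where f: "\<And>z. f z = c \<bullet> z + d" and f_side: "\<And>z. z \<in> pt t ` V \<Longrightarrow> 0 \<le> f z"
    and f_zero: "{z. f z = 0} = {z. ?f z = 0}"
    \<comment> \<open>f is the secant through p and q or its negative, whichever is nonnegative on V\<close>
    using side
  proof
    assume out: "\<forall>i\<in>V. i \<le> p \<or> q \<le> i"
    have "0 \<le> ?f (pt t i)" if "i \<in> V" for i
      using secant_pt_nonneg[OF pqI] that out pq V by auto
    then show thesis by (intro that[OF secant_inner]) auto
  next
    assume inside: "\<forall>i\<in>V. p \<le> i \<and> i \<le> q"
    have "0 \<le> - ?f (pt t i)" if "i \<in> V" for i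
      using secant_pt_nonpos[OF pqI] that inside V by auto
    then show thesis by (intro that[OF neg_secant_inner]) auto
  qed
  have "convex hull (pt t ` V) \<inter> {z. ?f z = 0} = convex hull (pt t ` {p, q})"
    using convex_hull_Int_affine_zero_set[OF f f_side V(1)[THEN finite_imageI]]
      pt_image_Int_secant_zero[OF V(2) pqI] pq
    by (simp add: f_zero insert_absorb)
  moreover have "(convex hull (pt t ` V) \<inter> {z. ?f z = 0}) face_of convex hull (pt t ` V)"
    using affine_zero_set_face_of_convex_hull[OF f f_side] by (simp add: f_zero)
  ultimately have "closed_segment (pt t p) (pt t q) face_of convex hull (pt t ` V)"
    by (simp add: segment_convex_hull)
  then show ?thesis
    unfolding polygon_edge_def using pq by (intro exI[of _ p] exI[of _ q]) auto
qed

lemma tri_complex_fan: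
  assumes W: "W \<subseteq> I" "a \<in> W" "b \<in> W" "m \<in> W" "a < m" "m < b"
      "\<And>i. i \<in> W \<Longrightarrow> a \<le> i" "\<And>i. i \<in> W \<Longrightarrow> i \<le> b"
    and T1: "tri_complex t {i \<in> W. i \<le> m} T1" and T2: "tri_complex t {i \<in> W. m \<le> i} T2"
  shows "tri_complex t W (insert {a, m, b} (T1 \<union> T2))"
proof -
  have D: "{a, m, b} \<subseteq> W" "card {a, m, b} = 3" using W by auto
  have in_T1: "finite \<tau>" "\<tau> \<subseteq> I" "\<And>i. i \<in> \<tau> \<Longrightarrow> a \<le> i \<and> i \<le> m" if "\<tau> \<in> T1" for \<tau>
  proof -
    have "\<tau> \<subseteq> {i \<in> W. i \<le> m}" "card \<tau> = 3" using that T1 unfolding tri_complex_def by auto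
    then show "finite \<tau>" "\<tau> \<subseteq> I" "\<And>i. i \<in> \<tau> \<Longrightarrow> a \<le> i \<and> i \<le> m"
      using W(1,7) by (auto intro: card_ge_0_finite)
  qed
  have in_T2: "finite \<tau>" "\<tau> \<subseteq> I" "\<And>i. i \<in> \<tau> \<Longrightarrow> m \<le> i \<and> i \<le> b" if "\<tau> \<in> T2" for \<tau>
  proof -
    have "\<tau> \<subseteq> {i \<in> W. m \<le> i}" "card \<tau> = 3" using that T2 unfolding tri_complex_def by auto
    then show "finite \<tau>" "\<tau> \<subseteq> I" "\<And>i. i \<in> \<tau> \<Longrightarrow> m \<le> i \<and> i \<le> b"
      using W(1,8) by (auto intro: card_ge_0_finite)
  qed
  have T1W: "tri_complex t W T1" and T2W: "tri_complex t W T2"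
    by (rule tri_complex_mono[OF T1], blast) (rule tri_complex_mono[OF T2], blast)
  have "tri_complex t W (T2 \<union> {{a, m, b}})"
  proof (rule tri_complex_Un[OF T2W tri_complex_singleton[OF D]])
    fix \<tau> \<sigma> assume "\<tau> \<in> T2" "\<sigma> \<in> {{a, m, b}}"
    then show "convex hull (pt t ` \<tau>) \<inter> convex hull (pt t ` \<sigma>) = convex hull (pt t ` (\<tau> \<inter> \<sigma>))"
      using W by (intro convex_hull_Int_chord_sides[OF _ _ W(6) in_T2]) auto
  qed
  then have "tri_complex t W (T1 \<union> (T2 \<union> {{a, m, b}}))"
  proof (rule tri_complex_Un[OF T1W])
    fix \<tau> \<sigma> assume "\<tau> \<in> T1" "\<sigma> \<in> T2 \<union> {{a, m, b}}"
    then show "convex hull (pt t ` \<tau>) \<inter> convex hull (pt t ` \<sigma>) = convex hull (pt t ` (\<tau> \<inter> \<sigma>))"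
      using W in_T2(1,3) in_T2(2)[THEN subsetD]
      by (intro convex_hull_Int_chord_sides[OF _ _ W(5) in_T1]) auto
  qed
  then show ?thesis by (simp add: insert_commute)
qed

lemma convex_hull_fan_cover:
  assumes W: "finite W" "W \<subseteq> I" "a \<in> W" "b \<in> W" "m \<in> W" "a < m" "m < b"
      "\<And>i. i \<in> W \<Longrightarrow> a \<le> i" "\<And>i. i \<in> W \<Longrightarrow> i \<le> b"
    and T1: "convex hull (pt t ` {i \<in> W. i \<le> m}) \<subseteq>
      (\<Union>\<tau>\<in>T1. convex hull (pt t ` \<tau>)) \<union> convex hull (pt t ` {a, m})"
    and T2: "convex hull (pt t ` {i \<in> W. m \<le> i}) \<subseteq>
      (\<Union>\<tau>\<in>T2. convex hull (pt t ` \<tau>)) \<union> convex hull (pt t ` {m, b})"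
  shows "convex hull (pt t ` W) \<subseteq> (\<Union>\<tau>\<in>insert {a, m, b} (T1 \<union> T2). convex hull (pt t ` \<tau>))"
    (is "_ \<subseteq> ?U")
proof -
  define W' where "W' = {i \<in> W. i \<le> a \<or> m \<le> i}"
  have W': "finite W'" "W' \<subseteq> I" "m \<in> W'" "b \<in> W'" using W unfolding W'_def by auto
  have "{i \<in> W. a \<le> i \<and> i \<le> m} = {i \<in> W. i \<le> m}" using W by auto
  then have "convex hull (pt t ` W) \<subseteq> convex hull (pt t ` {i \<in> W. i \<le> m}) \<union> convex hull (pt t ` W')"
    using convex_hull_subset_chord_sides[OF W(3,5,6,1,2)] unfolding W'_def by simp
  moreover have "{i \<in> W'. m \<le> i \<and> i \<le> b} = {i \<in> W. m \<le> i}"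
    using W(8,9) unfolding W'_def by auto
  moreover have "{i \<in> W'. i \<le> m \<or> b \<le> i} = {a, m, b}"
  proof (intro equalityI subsetI)
    fix i assume i: "i \<in> {i \<in> W'. i \<le> m \<or> b \<le> i}"
    then have "a \<le> i" "i \<le> b" using W(8,9) unfolding W'_def by auto
    with i show "i \<in> {a, m, b}" using W(6,7) unfolding W'_def by auto
  qed (use W(3-7) in \<open>auto simp: W'_def\<close>)
  ultimately have cut: "convex hull (pt t ` W) \<subseteq> convex hull (pt t ` {i \<in> W. i \<le> m}) \<union>
      convex hull (pt t ` {i \<in> W. m \<le> i}) \<union> convex hull (pt t ` {a, m, b})"
    using convex_hull_subset_chord_sides[OF W'(3,4) W(7) W'(1,2)] by auto
  have "convex hull (pt t ` {a, m}) \<subseteq> convex hull (pt t ` {a, m, b})"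
    "convex hull (pt t ` {m, b}) \<subseteq> convex hull (pt t ` {a, m, b})"
    by (auto intro!: hull_mono)
  moreover have D: "convex hull (pt t ` {a, m, b}) \<subseteq> ?U"
    and "(\<Union>\<tau>\<in>T1. convex hull (pt t ` \<tau>)) \<subseteq> ?U" "(\<Union>\<tau>\<in>T2. convex hull (pt t ` \<tau>)) \<subseteq> ?U"
    by auto
  ultimately have "convex hull (pt t ` {i \<in> W. i \<le> m}) \<subseteq> ?U"
    "convex hull (pt t ` {i \<in> W. m \<le> i}) \<subseteq> ?U"
    using T1 T2 by (meson Un_least order_trans)+
  with D cut show ?thesis by (meson Un_least order_trans)
qed

text \<open>
  For two vertices no triangle is needed; the polygon is then the chord {Min V, Max V}, which
  the third conjunct excepts.
\<close>

lemma good_tri_complex_exists: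
  assumes LR: "cond_LR L R" and LMR: "cond_LMR L M R" and MM: "cond_MM M"
    and "finite V" "V \<subseteq> I" "2 \<le> card V"
    and "\<And>p q. consecutive V p q \<Longrightarrow> good_edge L M R {p, q}"
    and "good_edge L M R {Min V, Max V}"
  shows "\<exists>T. tri_complex t V T \<and> (\<forall>e\<in>tri_edges T. good_edge L M R e) \<and>
    convex hull (pt t ` V) \<subseteq> (\<Union>\<tau>\<in>T. convex hull (pt t ` \<tau>)) \<union> convex hull (pt t ` {Min V, Max V}) \<and>
    (3 \<le> card V \<longrightarrow> convex hull (pt t ` V) \<subseteq> (\<Union>\<tau>\<in>T. convex hull (pt t ` \<tau>)))"
  using assms(4-)
proof (induction "card V" arbitrary: V rule: less_induct)
  case less
  note V = less.prems(1-3) and consecutive_good = less.prems(4)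
  define a b where "a = Min V" and "b = Max V"
  have "V \<noteq> {}" using V(3) by auto
  then have ab: "a \<in> V" "b \<in> V" "a < b" "\<And>i. i \<in> V \<Longrightarrow> a \<le> i" "\<And>i. i \<in> V \<Longrightarrow> i \<le> b"
    using V Min_less_Max[OF V(1,3)] unfolding a_def b_def by auto
  have good_ab: "good_edge L M R {a, b}" using less.prems(5) unfolding a_def b_def .
  show ?case
  proof (cases "card V = 2")
    case True
    then have "convex hull (pt t ` V) = convex hull (pt t ` {Min V, Max V})"
      by (metis card_2_Min_Max)
    then show ?thesis by (intro exI[of _ "{}"]) (simp add: True tri_complex_def tri_edges_def)
  next
    case False
    then obtain u where "u \<in> V" "a < u" "u < b"
      using exists_between_Min_Max[OF V(1) _ V(3)] unfolding a_def b_def by blast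
    then obtain m where m: "m \<in> V" "a < m" "m < b" "good_edge L M R {a, m}" "good_edge L M R {m, b}"
      using exists_good_apex[OF LR LMR MM V(1) ab(1,2) _ _ _ good_ab consecutive_good] by blast
    define V1 V2 where "V1 = {i \<in> V. i \<le> m}" and "V2 = {i \<in> V. m \<le> i}"
    note split = split_at_vertex[OF V(1) m(1), folded a_def b_def, OF m(2,3), folded V1_def V2_def]
    have V12: "finite V1" "V1 \<subseteq> I" "finite V2" "V2 \<subseteq> I"
      using V(1,2) unfolding V1_def V2_def by auto
    have "good_edge L M R {p, q}" if "consecutive V1 p q" for p q
      using that consecutive_good consecutive_lower_part unfolding V1_def by blast
    then obtain T1 where T1: "tri_complex t V1 T1" "\<forall>e\<in>tri_edges T1. good_edge L M R e"
        "convex hull (pt t ` V1) \<subseteq> (\<Union>\<tau>\<in>T1. convex hull (pt t ` \<tau>)) \<union> convex hull (pt t ` {a, m})"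
      using less.hyps[OF split(5) V12(1,2) split(7) _ m(4)[folded split(1,2)]]
      unfolding split(1,2) by blast
    have "good_edge L M R {p, q}" if "consecutive V2 p q" for p q
      using that consecutive_good consecutive_upper_part unfolding V2_def by blast
    then obtain T2 where T2: "tri_complex t V2 T2" "\<forall>e\<in>tri_edges T2. good_edge L M R e"
        "convex hull (pt t ` V2) \<subseteq> (\<Union>\<tau>\<in>T2. convex hull (pt t ` \<tau>)) \<union> convex hull (pt t ` {m, b})"
      using less.hyps[OF split(6) V12(3,4) split(8) _ m(5)[folded split(3,4)]]
      unfolding split(3,4) by blast
    define T where "T = insert {a, m, b} (T1 \<union> T2)"
    have "tri_complex t V T"
      using tri_complex_fan[OF V(2) ab(1,2) m(1-3) ab(4,5)
          T1(1)[unfolded V1_def] T2(1)[unfolded V2_def]]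
      unfolding T_def .
    moreover have "convex hull (pt t ` V) \<subseteq> (\<Union>\<tau>\<in>T. convex hull (pt t ` \<tau>))"
      using convex_hull_fan_cover[OF V(1,2) ab(1,2) m(1-3) ab(4,5)
          T1(3)[unfolded V1_def] T2(3)[unfolded V2_def]]
      unfolding T_def .
    moreover have "tri_edges T \<subseteq> {{a, m}, {a, b}, {m, b}} \<union> tri_edges T1 \<union> tri_edges T2"
      using tri_edges_insert_triangle[of a m b "T1 \<union> T2"] unfolding T_def tri_edges_Un by auto
    then have "\<forall>e\<in>tri_edges T. good_edge L M R e"
      using T1(2) T2(2) m(4,5) good_ab by blast
    ultimately show ?thesis by blast
  qed
qed

end

theorem lemma3p8:
  fixes n :: nat and t :: "nat \<Rightarrow> real"
    and L R M :: "nat set set" and V :: "nat set"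
  assumes t_mono: "strict_mono_on {1..n} t"
    and L_edges: "\<forall>e\<in>L. e \<subseteq> {1..n} \<and> card e = 2"
    and R_edges: "\<forall>e\<in>R. e \<subseteq> {1..n} \<and> card e = 2"
    and M_tris: "\<forall>m\<in>M. m \<subseteq> {1..n} \<and> card m = 3"
    and LR: "cond_LR L R"
    and LMR: "cond_LMR L M R"
    and MM: "cond_MM M"
    and V_sub: "V \<subseteq> {1..n}"
    and V_card: "card V \<ge> 3"
    and P_edges: "\<forall>e. polygon_edge t V e \<longrightarrow> good_edge L M R e"
  shows "\<exists>T. is_triangulation t V T \<and> (\<forall>e\<in>tri_edges T. good_edge L M R e)"
proof -
  have V: "finite V" "V \<subseteq> {1..n}" "2 \<le> card V" using V_sub V_card finite_subset by auto
  have "good_edge L M R {p, q}" if "consecutive V p q" for p q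
    using that P_edges polygon_edge_if_one_side[OF t_mono V(1,2), of p q]
    unfolding consecutive_def by (meson not_le)
  moreover have "good_edge L M R {Min V, Max V}"
  proof -
    have "V \<noteq> {}" using V(3) by auto
    then have "polygon_edge t V {Min V, Max V}"
      using V(1) Min_less_Max[OF V(1,3)]
      by (intro polygon_edge_if_one_side[OF t_mono V(1,2)]) auto
    then show ?thesis using P_edges by blast
  qed
  ultimately obtain T where "tri_complex t V T" "\<forall>e\<in>tri_edges T. good_edge L M R e"
      "convex hull (pt t ` V) \<subseteq> (\<Union>\<tau>\<in>T. convex hull (pt t ` \<tau>))"
    using good_tri_complex_exists[OF t_mono LR LMR MM V] V_card by blast
  then show ?thesis using is_triangulation_iff by blast
qed

end
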